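(* Let $ABCD$ be a convex quadrilateral. Let $\alpha_1,\alpha_2,\alpha_3,\alpha_4$ be the four angles that the diagonal $AC$ makes with the sides, namely $\angle BAC,\angle BCA,\angle DAC,\angle DCA$. Let $\beta_1,\beta_2,\beta_3,\beta_4$ be the four angles that the diagonal $BD$ makes with the sides, namely $\angle ABD,\angle ADB,\angle CBD,\angle CDB$. Suppose $0<\varepsilon<\frac{\pi}{12}$ and $|\alpha_i-\frac{\pi}{4}|<\varepsilon$ for every $i$. Then $|\beta_j-\frac{\pi}{4}|<3\varepsilon$ for every $j$. *)

theory Defs
  imports "HOL-Analysis.Analysis"
begin

definition vangle :: "real^2 \<Rightarrow> real^2 \<Rightarrow> real" where
  "vangle u v = arccos ((u \<bullet> v) / (norm u * norm v))"

definition angle3 :: "real^2 \<Rightarrow> real^2 \<Rightarrow> real^2 \<Rightarrow> real" where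
  "angle3 X Y Z = vangle (X - Y) (Z - Y)"

(* Convex (non-degenerate) quadrilateral ABCD with vertices in this cyclic order:
   no three vertices collinear, and the diagonals AC and BD cross at a point
   interior to both. *)
definition convex_quadrilateral :: "real^2 \<Rightarrow> real^2 \<Rightarrow> real^2 \<Rightarrow> real^2 \<Rightarrow> bool" where
  "convex_quadrilateral A B C D \<longleftrightarrow>
     \<not> collinear {A, B, C} \<and> \<not> collinear {A, B, D} \<and>
     \<not> collinear {A, C, D} \<and> \<not> collinear {B, C, D} \<and>
     open_segment A C \<inter> open_segment B D \<noteq> {}"

end

theory Submission
  imports Defs
begin

text \<open>
  Choose coordinates with \<open>A\<close> at the origin, \<open>C\<close> on the positive first axis, \<open>B\<close> above and
  \<open>D\<close> below it (the diagonals cross). If \<open>(x, y)\<close> is \<open>B\<close>, the cotangents \<open>x/y\<close> and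
  \<open>(|AC| - x)/y\<close> of the base angles at \<open>A\<close> and \<open>C\<close> both lie in the interval
  \<open>(tan (\<pi>/4 - \<epsilon>), tan (\<pi>/4 + \<epsilon>))\<close> of length \<open>2 tan (2\<epsilon>)\<close>, so \<open>B\<close> is at horizontal
  distance less than \<open>tan (2\<epsilon>) y\<close> from the perpendicular bisector of \<open>AC\<close>; likewise for \<open>D\<close>.
  Hence \<open>BD\<close> makes an angle less than \<open>2\<epsilon>\<close> with that bisector, while \<open>BA\<close> makes an angle
  within \<open>\<epsilon>\<close> of \<open>\<pi>/4\<close> with it, so \<open>\<angle>ABD\<close> is within \<open>3\<epsilon>\<close> of \<open>\<pi>/4\<close>. Relabelling the
  quadrilateral gives the other three angles.
\<close>

lemma inner_vec2: "(u::real^2) \<bullet> v = u$1 * v$1 + u$2 * v$2"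
  by (simp add: inner_vec_def sum_2)

lemma norm_vec2: "norm (u::real^2) = sqrt ((u$1)\<^sup>2 + (u$2)\<^sup>2)"
  by (simp add: norm_eq_sqrt_inner inner_vec2 power2_eq_square)

definition cross2 :: "real^2 \<Rightarrow> real^2 \<Rightarrow> real" where
  "cross2 v w = v$1 * w$2 - v$2 * w$1"

lemma cross2_self [simp]: "cross2 v v = 0"
  by (simp add: cross2_def)

lemma cross2_diff_right: "cross2 v (w - u) = cross2 v w - cross2 v u"
  by (simp add: cross2_def algebra_simps)

lemma cross2_add_right: "cross2 v (u + w) = cross2 v u + cross2 v w"
  by (simp add: cross2_def algebra_simps)

lemma cross2_scaleR_right: "cross2 v (c *\<^sub>R w) = c * cross2 v w"
  by (simp add: cross2_def algebra_simps)

lemma collinear_iff_cross2: "collinear {0, v, w} \<longleftrightarrow> cross2 v w = 0"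
proof
  assume "collinear {0, v, w}"
  then show "cross2 v w = 0"
    by (auto simp: collinear_lemma cross2_def)
next
  assume cross: "cross2 v w = 0"
  show "collinear {0, v, w}"
  proof (cases "v = 0")
    case False
    then have vv: "v \<bullet> v \<noteq> 0" by simp
    have "w = ((v \<bullet> w) / (v \<bullet> v)) *\<^sub>R v"
      using cross vv by (simp add: vec_eq_iff forall_2 inner_vec2 cross2_def field_simps)
    then show ?thesis by (metis collinear_lemma)
  qed simp
qed

text \<open>
  Coordinates of \<open>w\<close> in the orthogonal frame \<open>(v, \<sigma> v\<^sup>\<bottom>)\<close>: for \<open>\<sigma> = \<plusminus>1\<close> this is a
  similarity of ratio \<open>|v|\<close> mapping \<open>v\<close> onto the positive first axis, with \<open>\<sigma>\<close> choosing the
  orientation.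
\<close>

definition frame_coords :: "real^2 \<Rightarrow> real \<Rightarrow> real^2 \<Rightarrow> real^2" where
  "frame_coords v \<sigma> w = vector [v \<bullet> w, \<sigma> * cross2 v w]"

lemma frame_coords_diff: "frame_coords v \<sigma> (u - w) = frame_coords v \<sigma> u - frame_coords v \<sigma> w"
  by (simp add: frame_coords_def vec_eq_iff forall_2 inner_diff_right cross2_diff_right algebra_simps)

lemma frame_coords_self: "frame_coords v \<sigma> v = vector [v \<bullet> v, 0]"
  by (simp add: frame_coords_def)

lemma inner_frame_coords:
  assumes "\<sigma>\<^sup>2 = 1"
  shows "frame_coords v \<sigma> u \<bullet> frame_coords v \<sigma> w = (v \<bullet> v) * (u \<bullet> w)"
proof -
  have "frame_coords v \<sigma> u \<bullet> frame_coords v \<sigma> w = (v \<bullet> u) * (v \<bullet> w) + \<sigma>\<^sup>2 * (cross2 v u * cross2 v w)"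
    by (simp add: frame_coords_def inner_vec2 power2_eq_square algebra_simps)
  also have "\<dots> = (v \<bullet> v) * (u \<bullet> w)"
    using assms by (simp add: inner_vec2 cross2_def algebra_simps)
  finally show ?thesis .
qed

lemma vangle_frame_coords:
  assumes "v \<noteq> 0" "\<sigma>\<^sup>2 = 1"
  shows "vangle (frame_coords v \<sigma> u) (frame_coords v \<sigma> w) = vangle u w"
proof -
  have norm: "norm (frame_coords v \<sigma> x) = norm v * norm x" for x
    using assms by (simp add: norm_eq_sqrt_inner inner_frame_coords real_sqrt_mult)
  have "v \<bullet> v = norm v * norm v"
    by (simp add: power2_norm_eq_inner[symmetric] power2_eq_square)
  then show ?thesis
    using assms by (simp add: vangle_def inner_frame_coords norm)
qed

lemma angle3_frame_coords:
  assumes "v \<noteq> 0" "\<sigma>\<^sup>2 = 1"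
  shows "angle3 (frame_coords v \<sigma> (X - P)) (frame_coords v \<sigma> (Y - P)) (frame_coords v \<sigma> (Z - P))
    = angle3 X Y Z"
  using vangle_frame_coords[OF assms] by (simp add: angle3_def frame_coords_diff[symmetric])

lemma collinear_iff_cross2_diff: "collinear {A, Z, C} \<longleftrightarrow> cross2 (C - A) (Z - A) = 0"
proof -
  have "collinear {A, Z, C} \<longleftrightarrow> collinear {Z, A, C}"
    by (simp add: insert_commute)
  also have "\<dots> \<longleftrightarrow> collinear {0, Z - A, C - A}"
    by (rule collinear_3) (simp add: NO_MATCH_def)
  also have "\<dots> \<longleftrightarrow> collinear {0, C - A, Z - A}"
    by (simp add: insert_commute)
  finally show ?thesis
    by (simp add: collinear_iff_cross2)
qed

lemma convex_quadrilateral_frame: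
  assumes "convex_quadrilateral A B C D"
  obtains \<sigma> where "C \<noteq> A" "\<sigma>\<^sup>2 = 1"
    "(frame_coords (C - A) \<sigma> (B - A))$2 > 0" "(frame_coords (C - A) \<sigma> (D - A))$2 < 0"
proof -
  define h where "h Z = cross2 (C - A) (Z - A)" for Z
  have "\<not> collinear {A, B, C}" "\<not> collinear {A, D, C}"
    using assms by (auto simp: convex_quadrilateral_def insert_commute)
  then have hB: "h B \<noteq> 0" and hD: "h D \<noteq> 0" and "C \<noteq> A"
    by (auto simp: h_def collinear_iff_cross2_diff cross2_def)
  obtain P where P: "P \<in> open_segment A C" "P \<in> open_segment B D"
    using assms by (auto simp: convex_quadrilateral_def)
  obtain t where t: "P = (1 - t) *\<^sub>R A + t *\<^sub>R C"
    using P(1) unfolding in_segment by blast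
  obtain s where s: "P = (1 - s) *\<^sub>R B + s *\<^sub>R D" "0 < s" "s < 1"
    using P(2) unfolding in_segment by blast
  have "P - A = t *\<^sub>R (C - A)"
    unfolding t by (simp add: algebra_simps)
  then have "h P = 0"
    unfolding h_def by (simp add: cross2_scaleR_right)
  moreover have "P - A = (1 - s) *\<^sub>R (B - A) + s *\<^sub>R (D - A)"
    unfolding s(1) by (simp add: algebra_simps)
  then have "h P = (1 - s) * h B + s * h D"
    unfolding h_def by (simp only: cross2_add_right cross2_scaleR_right)
  ultimately have "s * h D = - ((1 - s) * h B)"
    by simp
  then have "s * (h B * h D) = - ((1 - s) * (h B)\<^sup>2)"
    by (metis mult.left_commute mult_minus_right power2_eq_square)
  moreover have "(1 - s) * (h B)\<^sup>2 > 0"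
    using s hB by simp
  ultimately have "s * (h B * h D) < s * 0"
    by linarith
  then have opposite: "h B * h D < 0"
    using s(2) by (simp only: mult_less_cancel_left_pos)
  show thesis
  proof
    show "(sgn (h B))\<^sup>2 = 1"
      using hB by (simp add: sgn_real_def)
    show "(frame_coords (C - A) (sgn (h B)) (B - A))$2 > 0"
      using hB by (simp add: frame_coords_def h_def[symmetric] sgn_real_def)
    show "(frame_coords (C - A) (sgn (h B)) (D - A))$2 < 0"
      using opposite by (auto simp: frame_coords_def h_def[symmetric] sgn_real_def mult_less_0_iff)
  qed fact
qed

lemma norm_vec2_slope:
  assumes "u$2 \<noteq> 0"
  shows "norm (u::real^2) = \<bar>u$2\<bar> * sqrt (1 + (u$1 / u$2)\<^sup>2)"
proof -
  have "(u$1)\<^sup>2 + (u$2)\<^sup>2 = (u$2)\<^sup>2 * (1 + (u$1 / u$2)\<^sup>2)"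
    using assms by (simp add: field_simps)
  then show ?thesis
    by (simp add: norm_vec2 real_sqrt_mult)
qed

lemma vangle_uminus [simp]: "vangle (- u) (- w) = vangle u w"
  by (simp add: vangle_def)

lemma vangle_eq_abs_arctan_diff:
  assumes "u$2 * w$2 > 0"
  shows "vangle u w = \<bar>arctan (u$1 / u$2) - arctan (w$1 / w$2)\<bar>"
proof -
  define z1 z2 where "z1 = u$1 / u$2" and "z2 = w$1 / w$2"
  have nz: "u$2 \<noteq> 0" "w$2 \<noteq> 0"
    using assms by auto
  have "u \<bullet> w = (u$2 * w$2) * (1 + z1 * z2)"
    using nz by (simp add: inner_vec2 z1_def z2_def field_simps)
  moreover have "norm u * norm w = (u$2 * w$2) * (sqrt (1 + z1\<^sup>2) * sqrt (1 + z2\<^sup>2))"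
    using assms nz by (simp add: norm_vec2_slope z1_def z2_def abs_mult[symmetric])
  ultimately have "u \<bullet> w / (norm u * norm w) = (1 + z1 * z2) / (sqrt (1 + z1\<^sup>2) * sqrt (1 + z2\<^sup>2))"
    using nz by simp
  also have "\<dots> = cos (arctan z1 - arctan z2)"
    by (simp add: cos_diff cos_arctan sin_arctan add_divide_distrib)
  also have "\<dots> = cos \<bar>arctan z1 - arctan z2\<bar>"
    by simp
  finally have "vangle u w = arccos (cos \<bar>arctan z1 - arctan z2\<bar>)"
    by (simp add: vangle_def)
  also have "\<dots> = \<bar>arctan z1 - arctan z2\<bar>"
    using arctan_bounded[of z1] arctan_bounded[of z2] by (intro arccos_cos) auto
  finally show ?thesis
    by (simp add: z1_def z2_def)
qed

lemma vangle_positive_axis: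
  assumes "u$2 \<noteq> 0" "w$1 > 0" "w$2 = 0"
  shows "vangle u w = pi/2 - arctan (u$1 / \<bar>u$2\<bar>)"
proof -
  define z where "z = u$1 / \<bar>u$2\<bar>"
  have "norm w = w$1"
    using assms by (simp add: norm_vec2)
  moreover have "norm u = \<bar>u$2\<bar> * sqrt (1 + z\<^sup>2)"
    using assms norm_vec2_slope[of u] by (simp add: z_def power_divide)
  moreover have "u$1 = z * \<bar>u$2\<bar>"
    using assms by (simp add: z_def)
  ultimately have "u \<bullet> w / (norm u * norm w) = z / sqrt (1 + z\<^sup>2)"
    using assms by (simp add: inner_vec2)
  also have "\<dots> = cos (pi/2 - arctan z)"
    by (simp add: cos_diff sin_arctan)
  finally have "vangle u w = arccos (cos (pi/2 - arctan z))"
    by (simp add: vangle_def)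
  also have "\<dots> = pi/2 - arctan z"
    using arctan_bounded[of z] by (intro arccos_cos) auto
  finally show ?thesis
    by (simp add: z_def)
qed

lemma tan_quarter_pi_add_minus_diff:
  assumes "cos (2 * e) \<noteq> 0"
  shows "tan (pi/4 + e) - tan (pi/4 - e) = 2 * tan (2 * e)"
proof -
  have diff: "(pi/4 + e) - (pi/4 - e) = 2 * e" and "(pi/4 + e) + (pi/4 - e) = pi/2"
    by simp_all
  then have prod: "cos (pi/4 + e) * cos (pi/4 - e) = cos (2 * e) / 2"
    using cos_times_cos[of "pi/4 + e" "pi/4 - e"] by simp
  then have "cos (pi/4 + e) \<noteq> 0" "cos (pi/4 - e) \<noteq> 0"
    using assms by auto
  then have "tan (pi/4 + e) - tan (pi/4 - e)
      = (sin (pi/4 + e) * cos (pi/4 - e) - cos (pi/4 + e) * sin (pi/4 - e))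
        / (cos (pi/4 + e) * cos (pi/4 - e))"
    by (simp add: tan_def diff_frac_eq)
  also have "\<dots> = sin (2 * e) / (cos (2 * e) / 2)"
    unfolding prod sin_diff[symmetric] diff by simp
  also have "\<dots> = 2 * tan (2 * e)"
    by (simp add: tan_def)
  finally show ?thesis .
qed

lemma tan_bounds_of_arctan_near_quarter_pi:
  assumes "\<bar>arctan z - pi/4\<bar> < \<epsilon>" "\<epsilon> < pi/4"
  shows "tan (pi/4 - \<epsilon>) < z" "z < tan (pi/4 + \<epsilon>)"
proof -
  have "tan (pi/4 - \<epsilon>) < tan (arctan z)"
    using assms arctan_bounded[of z] by (intro tan_monotone) auto
  moreover have "tan (arctan z) < tan (pi/4 + \<epsilon>)"
    using assms arctan_bounded[of z] by (intro tan_monotone) auto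
  ultimately show "tan (pi/4 - \<epsilon>) < z" "z < tan (pi/4 + \<epsilon>)"
    by (simp_all add: tan_arctan)
qed

text \<open>
  \<open>(x, y)\<close> is the apex of a triangle with base from \<open>0\<close> to \<open>(k, 0)\<close>; \<open>x/y\<close> and \<open>(k - x)/y\<close> are
  the cotangents of its base angles.
\<close>

lemma apex_offset_bound:
  fixes x y k :: real
  assumes "y > 0" "\<epsilon> < pi/4"
    and "\<bar>arctan (x / y) - pi/4\<bar> < \<epsilon>" "\<bar>arctan ((k - x) / y) - pi/4\<bar> < \<epsilon>"
  shows "\<bar>2 * x - k\<bar> < 2 * tan (2 * \<epsilon>) * y"
proof -
  have "\<epsilon> > 0"
    using assms(3) by linarith
  then have "cos (2 * \<epsilon>) \<noteq> 0"
    using assms(2) cos_gt_zero_pi[of "2 * \<epsilon>"] by auto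
  then have width: "tan (pi/4 + \<epsilon>) - tan (pi/4 - \<epsilon>) = 2 * tan (2 * \<epsilon>)"
    by (rule tan_quarter_pi_add_minus_diff)
  have "\<bar>x / y - (k - x) / y\<bar> < 2 * tan (2 * \<epsilon>)"
    using tan_bounds_of_arctan_near_quarter_pi[OF assms(3)] tan_bounds_of_arctan_near_quarter_pi[OF assms(4)]
      assms(2) width by (simp add: abs_less_iff)
  moreover have "x / y - (k - x) / y = (2 * x - k) / y"
    by (simp add: diff_divide_distrib)
  ultimately show ?thesis
    using assms(1) by (simp add: abs_divide pos_divide_less_eq)
qed

lemma diagonal_angle_bound_normalized:
  fixes b c d :: "real^2"
  assumes c: "c$1 > 0" "c$2 = 0" and b: "b$2 > 0" and d: "d$2 < 0" and small: "\<epsilon> \<le> pi/12"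
    and "\<bar>angle3 b 0 c - pi/4\<bar> < \<epsilon>" "\<bar>angle3 b c 0 - pi/4\<bar> < \<epsilon>"
    and "\<bar>angle3 d 0 c - pi/4\<bar> < \<epsilon>" "\<bar>angle3 d c 0 - pi/4\<bar> < \<epsilon>"
  shows "\<bar>angle3 0 b d - pi/4\<bar> < 3 * \<epsilon>"
proof -
  have base_angles: "angle3 z 0 c = pi/2 - arctan (z$1 / \<bar>z$2\<bar>)"
      "angle3 z c 0 = pi/2 - arctan ((c$1 - z$1) / \<bar>z$2\<bar>)" if "z$2 \<noteq> 0" for z
  proof -
    show "angle3 z 0 c = pi/2 - arctan (z$1 / \<bar>z$2\<bar>)"
      using that c by (simp add: angle3_def vangle_positive_axis)
    have "angle3 z c 0 = vangle (c - z) c"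
      using vangle_uminus[of "c - z" c] by (simp add: angle3_def)
    then show "angle3 z c 0 = pi/2 - arctan ((c$1 - z$1) / \<bar>z$2\<bar>)"
      using that c by (simp add: vangle_positive_axis)
  qed
  have "\<bar>arctan (b$1 / b$2) - pi/4\<bar> < \<epsilon>" "\<bar>arctan ((c$1 - b$1) / b$2) - pi/4\<bar> < \<epsilon>"
    "\<bar>arctan (d$1 / - d$2) - pi/4\<bar> < \<epsilon>" "\<bar>arctan ((c$1 - d$1) / - d$2) - pi/4\<bar> < \<epsilon>"
    using assms base_angles[of b] base_angles[of d] by (simp_all add: abs_minus_commute)
  note near = this
  have "\<epsilon> > 0" "\<epsilon> < pi/4"
    using near(1) small pi_gt3 by linarith+
  have "\<bar>2 * b$1 - c$1\<bar> < 2 * tan (2 * \<epsilon>) * b$2"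
    using apex_offset_bound[OF b \<open>\<epsilon> < pi/4\<close> near(1,2)] .
  moreover have "\<bar>2 * d$1 - c$1\<bar> < 2 * tan (2 * \<epsilon>) * - d$2"
    using d apex_offset_bound[OF _ \<open>\<epsilon> < pi/4\<close> near(3,4)] by simp
  ultimately have "\<bar>d$1 - b$1\<bar> < tan (2 * \<epsilon>) * (b$2 - d$2)"
    unfolding abs_less_iff right_diff_distrib by linarith
  then have slope: "\<bar>(d$1 - b$1) / (d$2 - b$2)\<bar> < tan (2 * \<epsilon>)"
    using b d by (simp add: abs_divide divide_less_eq abs_minus_commute)
  have "\<bar>arctan ((d$1 - b$1) / (d$2 - b$2))\<bar> = arctan \<bar>(d$1 - b$1) / (d$2 - b$2)\<bar>"
    by (rule abs_arctan)
  also have "\<dots> < arctan (tan (2 * \<epsilon>))"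
    using slope by (simp add: arctan_less_iff)
  also have "\<dots> = 2 * \<epsilon>"
    using \<open>\<epsilon> > 0\<close> \<open>\<epsilon> < pi/4\<close> by (intro arctan_tan) auto
  finally have tilt: "\<bar>arctan ((d$1 - b$1) / (d$2 - b$2))\<bar> < 2 * \<epsilon>" .
  have "(- b)$2 * (d - b)$2 > 0"
    using b d by (simp add: mult_pos_neg)
  then have "angle3 0 b d = \<bar>arctan (b$1 / b$2) - arctan ((d$1 - b$1) / (d$2 - b$2))\<bar>"
    by (simp add: angle3_def vangle_eq_abs_arctan_diff)
  then show ?thesis
    using near(1) tilt small by (simp add: abs_less_iff)
qed

lemma convex_quadrilateral_diagonal_angle_bound:
  assumes "convex_quadrilateral A B C D" "\<epsilon> \<le> pi/12"
    and "\<bar>angle3 B A C - pi/4\<bar> < \<epsilon>" "\<bar>angle3 B C A - pi/4\<bar> < \<epsilon>"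
    and "\<bar>angle3 D A C - pi/4\<bar> < \<epsilon>" "\<bar>angle3 D C A - pi/4\<bar> < \<epsilon>"
  shows "\<bar>angle3 A B D - pi/4\<bar> < 3 * \<epsilon>"
proof -
  obtain \<sigma> where "C \<noteq> A" "\<sigma>\<^sup>2 = 1"
    and B: "(frame_coords (C - A) \<sigma> (B - A))$2 > 0" and D: "(frame_coords (C - A) \<sigma> (D - A))$2 < 0"
    using convex_quadrilateral_frame[OF assms(1)] .
  define f where "f Z = frame_coords (C - A) \<sigma> (Z - A)" for Z
  have f: "angle3 (f X) (f Y) (f Z) = angle3 X Y Z" for X Y Z
    using angle3_frame_coords \<open>C \<noteq> A\<close> \<open>\<sigma>\<^sup>2 = 1\<close> by (simp add: f_def)
  have "f A = 0"
    by (simp add: f_def frame_coords_def cross2_def vec_eq_iff forall_2)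
  then have f_base: "angle3 (f X) 0 (f Z) = angle3 X A Z" "angle3 (f X) (f Z) 0 = angle3 X Z A"
      "angle3 0 (f X) (f Z) = angle3 A X Z" for X Z
    using f by metis+
  have "(f C)$1 > 0" "(f C)$2 = 0"
    using \<open>C \<noteq> A\<close> by (simp_all add: f_def frame_coords_self)
  have "\<bar>angle3 0 (f B) (f D) - pi/4\<bar> < 3 * \<epsilon>"
    using B D assms(2-6) \<open>(f C)$1 > 0\<close> \<open>(f C)$2 = 0\<close>
    by (intro diagonal_angle_bound_normalized[of "f C"]) (simp_all add: f_def[symmetric] f_base)
  then show ?thesis
    by (simp add: f_base)
qed

lemma convex_quadrilateral_swap_AC: "convex_quadrilateral A B C D \<Longrightarrow> convex_quadrilateral C B A D"
  by (simp add: convex_quadrilateral_def insert_commute open_segment_commute)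

lemma convex_quadrilateral_swap_BD: "convex_quadrilateral A B C D \<Longrightarrow> convex_quadrilateral A D C B"
  by (simp add: convex_quadrilateral_def insert_commute open_segment_commute)

theorem lemma3p2p2:
  fixes A B C D :: "real^2" and \<epsilon> :: real
  assumes "convex_quadrilateral A B C D"
    and "0 < \<epsilon>" and "\<epsilon> < pi / 12"
    and "\<forall>\<alpha> \<in> {angle3 B A C, angle3 B C A, angle3 D A C, angle3 D C A}. \<bar>\<alpha> - pi / 4\<bar> < \<epsilon>"
  shows "\<forall>\<beta> \<in> {angle3 A B D, angle3 A D B, angle3 C B D, angle3 C D B}. \<bar>\<beta> - pi / 4\<bar> < 3 * \<epsilon>"
proof -
  note bound = convex_quadrilateral_diagonal_angle_bound[where \<epsilon> = \<epsilon>]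
  have small: "\<epsilon> \<le> pi/12"
    using assms(3) by simp
  have hyps: "\<bar>angle3 B A C - pi/4\<bar> < \<epsilon>" "\<bar>angle3 B C A - pi/4\<bar> < \<epsilon>"
      "\<bar>angle3 D A C - pi/4\<bar> < \<epsilon>" "\<bar>angle3 D C A - pi/4\<bar> < \<epsilon>"
    using assms(4) by simp_all
  have "convex_quadrilateral C B A D" "convex_quadrilateral A D C B" "convex_quadrilateral C D A B"
    using assms(1) convex_quadrilateral_swap_AC convex_quadrilateral_swap_BD by blast+
  then show ?thesis
    using bound[OF assms(1) small hyps] bound[of C B A D, OF _ small hyps(2,1,4,3)]
      bound[of A D C B, OF _ small hyps(3,4,1,2)] bound[of C D A B, OF _ small hyps(4,3,2,1)]
    by simp
qed

end
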